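(* Let $T$ be a positive random variable with characteristic function $\Phi(\omega)=\mathbb E[e^{i\omega T}]$, and let $\Delta>0$. Then $$\sup_{|\omega|\ge\Delta}|\Phi(\omega)|\ \ge\ e^{-\Delta\langle T\rangle\pi/2}.$$
   Context: $\langle T\rangle=\mathbb E[T]$ (if infinite, the bound is trivial). *)

theory Defs
  imports "HOL-Probability.Probability"
begin

end

theory Submission
  imports Defs "HOL-Complex_Analysis.Complex_Analysis"
begin

text \<open>The characteristic function of \<open>T \<ge> 0\<close> extends to \<open>z \<mapsto> E[exp (\<i> z T)]\<close>, which is
  holomorphic in the upper half-plane, continuous up to the real axis and bounded by \<open>1\<close>.
  If it is smaller than \<open>s < 1\<close> on \<open>{\<bar>\<omega>\<bar> \<ge> \<Delta>}\<close>, the two-constants theorem (the maximum principle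
  applied against the harmonic measure of \<open>{\<bar>x\<bar> \<ge> \<Delta>}\<close>) bounds its value at \<open>\<i> y\<close> by
  \<open>s powr (2 arctan (y / \<Delta>) / pi)\<close>. But that value is \<open>E[exp (- y T)] \<ge> 1 - y E[T]\<close>, and
  comparing both bounds as \<open>y \<rightarrow> 0\<close> gives \<open>s \<ge> exp (- \<Delta> E[T] pi / 2)\<close>.\<close>

lemma norm_exp_minus_one_minus_le:
  fixes w :: complex
  shows "norm (exp w - 1 - w) \<le> norm w ^ 2 * exp (norm w)"
proof -
  have "(\<lambda>k. w ^ (k + 2) /\<^sub>R fact (k + 2)) sums (exp w - (\<Sum>k<2. w ^ k /\<^sub>R fact k))"
    by (intro sums_split_initial_segment exp_converges)
  then have tail: "(\<lambda>k. w ^ (k + 2) /\<^sub>R fact (k + 2)) sums (exp w - 1 - w)"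
    by (simp add: eval_nat_numeral diff_diff_eq)
  have "(\<lambda>k. norm w ^ 2 * (norm w ^ k /\<^sub>R fact k)) sums (norm w ^ 2 * exp (norm w))"
    by (intro sums_mult exp_converges)
  moreover have "norm (w ^ (k + 2) /\<^sub>R fact (k + 2)) \<le> norm w ^ 2 * (norm w ^ k /\<^sub>R fact k)" for k
  proof -
    have "norm (w ^ (k + 2) /\<^sub>R fact (k + 2)) = norm w ^ 2 * (norm w ^ k / fact (k + 2))"
      by (simp add: norm_mult norm_power power2_eq_square field_simps del: fact_Suc of_nat_add)
    also have "\<dots> \<le> norm w ^ 2 * (norm w ^ k / fact k)"
      by (intro mult_left_mono divide_left_mono fact_mono) auto
    finally show ?thesis by (simp add: divide_inverse_commute)
  qed
  ultimately show ?thesis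
    by (intro norm_sums_le[OF tail])
qed

lemma mult_exp_neg_le:
  fixes y t :: real
  assumes "y > 0"
  shows "t * exp (- y * t) \<le> 1 / y"
proof -
  have "y * t \<le> exp (y * t)" using exp_ge_add_one_self[of "y * t"] by linarith
  then show ?thesis using assms by (simp add: exp_minus field_simps)
qed

lemma square_mult_exp_neg_le:
  fixes y t :: real
  assumes "y > 0" "t \<ge> 0"
  shows "t\<^sup>2 * exp (- y * t / 2) \<le> 8 / y\<^sup>2"
proof -
  have "0 \<le> y * t / 2" using assms by simp
  then have "(y * t / 2)\<^sup>2 / 2 \<le> exp (y * t / 2)"
    using exp_lower_Taylor_quadratic[of "y * t / 2"] by linarith
  then have "t\<^sup>2 \<le> 8 / y\<^sup>2 * exp (y * t / 2)"
    using assms by (simp add: power_divide power_mult_distrib field_simps)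
  then have "t\<^sup>2 * exp (- y * t / 2) \<le> 8 / y\<^sup>2 * exp (y * t / 2) * exp (- y * t / 2)"
    by (intro mult_right_mono) auto
  also have "\<dots> = 8 / y\<^sup>2" by (simp add: mult.assoc flip: exp_add)
  finally show ?thesis .
qed

text \<open>The damping \<open>exp (- Im z * t)\<close> absorbs the growth in \<open>t\<close> of the second-order remainder.\<close>
lemma exp_i_mult_first_order:
  fixes z h :: complex and t :: real
  assumes "Im z > 0" "t \<ge> 0" "norm h \<le> Im z / 2"
  shows "norm (exp (\<i> * (z + h) * t) - exp (\<i> * z * t) - h * (\<i> * t * exp (\<i> * z * t)))
           \<le> 8 / (Im z)\<^sup>2 * (norm h)\<^sup>2"
proof -
  define w where "w = \<i> * h * t"
  have norm_w: "norm w = norm h * t" using assms by (simp add: w_def norm_mult)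
  have "norm (exp w - 1 - w) \<le> (norm h * t)\<^sup>2 * exp (norm h * t)"
    using norm_exp_minus_one_minus_le[of w] by (simp only: norm_w)
  also have "\<dots> \<le> (norm h * t)\<^sup>2 * exp (Im z / 2 * t)"
    using mult_right_mono[OF assms(3,2)] by (intro mult_left_mono) auto
  finally have remainder: "norm (exp w - 1 - w) \<le> (norm h * t)\<^sup>2 * exp (Im z / 2 * t)" .
  have "exp (\<i> * (z + h) * t) - exp (\<i> * z * t) - h * (\<i> * t * exp (\<i> * z * t))
      = exp (\<i> * z * t) * (exp w - 1 - w)"
    by (simp add: w_def algebra_simps flip: exp_add)
  also have "norm \<dots> = exp (- Im z * t) * norm (exp w - 1 - w)"
    by (simp add: norm_mult)
  also have "\<dots> \<le> exp (- Im z * t) * ((norm h * t)\<^sup>2 * exp (Im z / 2 * t))"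
    by (rule mult_left_mono[OF remainder]) simp
  also have "\<dots> = (norm h)\<^sup>2 * (t\<^sup>2 * exp (- Im z * t / 2))"
    by (simp add: power_mult_distrib mult_ac flip: exp_add)
  also have "\<dots> \<le> (norm h)\<^sup>2 * (8 / (Im z)\<^sup>2)"
    using square_mult_exp_neg_le[OF assms(1,2)] by (intro mult_left_mono) auto
  finally show ?thesis by (simp add: mult.commute)
qed

lemma has_field_derivative_of_quadratic_remainder:
  fixes f :: "complex \<Rightarrow> complex"
  assumes "\<forall>\<^sub>F w in at z. norm (f w - f z - (w - z) * f') \<le> C * (norm (w - z))\<^sup>2"
  shows "(f has_field_derivative f') (at z)"
proof -
  have "\<forall>\<^sub>F w in at z. norm ((f w - f z) / (w - z) - f') \<le> C * norm (w - z)"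
    using assms eventually_neq_at_within[of z z UNIV]
  proof eventually_elim
    case (elim w)
    then have "(f w - f z) / (w - z) - f' = (f w - f z - (w - z) * f') / (w - z)"
      by (simp add: field_simps)
    also have "norm \<dots> \<le> C * (norm (w - z))\<^sup>2 / norm (w - z)"
      using elim by (simp add: norm_divide divide_right_mono)
    also have "\<dots> = C * norm (w - z)"
      using elim by (simp add: power2_eq_square)
    finally show ?case .
  qed
  moreover have "((\<lambda>w. C * norm (w - z)) \<longlongrightarrow> 0) (at z)"
    by (intro tendsto_eq_intros) auto
  ultimately have "((\<lambda>w. (f w - f z) / (w - z) - f') \<longlongrightarrow> 0) (at z)"
    by (rule Lim_null_comparison)
  then show ?thesis
    by (simp add: has_field_derivative_iff Lim_null[where l = f'])
qed

definition fourier_laplace :: "'a measure \<Rightarrow> ('a \<Rightarrow> real) \<Rightarrow> complex \<Rightarrow> complex" where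
  "fourier_laplace M T z = (CLINT x|M. exp (\<i> * z * T x))"

locale nonneg_random_variable = prob_space M for M :: "'a measure" +
  fixes T :: "'a \<Rightarrow> real"
  assumes T_measurable [measurable]: "T \<in> borel_measurable M"
    and T_nonneg: "\<And>x. x \<in> space M \<Longrightarrow> 0 \<le> T x"
begin

lemma AE_norm_exp_le_1:
  assumes "Im z \<ge> 0"
  shows "AE x in M. norm (exp (\<i> * z * T x)) \<le> 1"
  using assms T_nonneg by (intro AE_I2) (simp add: mult_nonneg_nonneg)

lemma integrable_exp:
  assumes "Im z \<ge> 0"
  shows "integrable M (\<lambda>x. exp (\<i> * z * T x))"
  by (rule integrable_const_bound[OF AE_norm_exp_le_1[OF assms]]) measurable

lemma norm_fourier_laplace_le_1:
  assumes "Im z \<ge> 0"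
  shows "norm (fourier_laplace M T z) \<le> 1"
proof -
  have "norm (fourier_laplace M T z) \<le> (\<integral>x. norm (exp (\<i> * z * T x)) \<partial>M)"
    unfolding fourier_laplace_def by (rule integral_norm_bound)
  also have "\<dots> \<le> (\<integral>x. 1 \<partial>M)"
    by (intro integral_mono_AE integrable_norm integrable_exp assms AE_norm_exp_le_1) simp
  finally show ?thesis by (simp add: prob_space)
qed

lemma continuous_on_fourier_laplace: "continuous_on {z. Im z \<ge> 0} (fourier_laplace M T)"
  unfolding continuous_on_sequentially
proof safe
  fix X :: "nat \<Rightarrow> complex" and z
  assume X: "\<forall>n. X n \<in> {z. Im z \<ge> 0}" "X \<longlonglongrightarrow> z"
  show "(fourier_laplace M T \<circ> X) \<longlonglongrightarrow> fourier_laplace M T z"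
    unfolding comp_def fourier_laplace_def
  proof (rule integral_dominated_convergence[where w = "\<lambda>_. 1"])
    show "(\<lambda>x. exp (\<i> * z * T x)) \<in> borel_measurable M"
      "(\<lambda>x. exp (\<i> * X n * T x)) \<in> borel_measurable M" for n
      by measurable
    show "AE x in M. (\<lambda>n. exp (\<i> * X n * T x)) \<longlonglongrightarrow> exp (\<i> * z * T x)"
      using X by (intro AE_I2 tendsto_intros)
    show "AE x in M. norm (exp (\<i> * X n * T x)) \<le> 1" for n
      using X by (intro AE_norm_exp_le_1) auto
  qed (rule integrable_const)
qed

lemma integrable_derivative_integrand:
  assumes "Im z > 0"
  shows "integrable M (\<lambda>x. \<i> * T x * exp (\<i> * z * T x))"
proof (rule integrable_const_bound)
  show "AE x in M. norm (\<i> * T x * exp (\<i> * z * T x)) \<le> 1 / Im z"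
    using T_nonneg mult_exp_neg_le[OF assms] by (intro AE_I2) (simp add: norm_mult)
qed measurable

lemma fourier_laplace_first_order:
  assumes z: "Im z > 0" and h: "norm h \<le> Im z / 2"
  shows "norm (fourier_laplace M T (z + h) - fourier_laplace M T z
                 - h * (CLINT x|M. \<i> * T x * exp (\<i> * z * T x)))
           \<le> 8 / (Im z)\<^sup>2 * (norm h)\<^sup>2"
proof -
  let ?r = "\<lambda>x. exp (\<i> * (z + h) * T x) - exp (\<i> * z * T x) - h * (\<i> * T x * exp (\<i> * z * T x))"
  have Im_zh: "Im (z + h) \<ge> 0" using abs_Im_le_cmod[of h] z h by simp
  have int: "integrable M (\<lambda>x. exp (\<i> * (z + h) * T x))"
    "integrable M (\<lambda>x. exp (\<i> * z * T x))"
    "integrable M (\<lambda>x. h * (\<i> * T x * exp (\<i> * z * T x)))"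
    using integrable_exp[OF Im_zh] integrable_exp[of z] integrable_derivative_integrand[OF z] z
    by auto
  have remainder_integral: "fourier_laplace M T (z + h) - fourier_laplace M T z
               - h * (CLINT x|M. \<i> * T x * exp (\<i> * z * T x)) = (CLINT x|M. ?r x)"
    unfolding fourier_laplace_def
    by (simp only: Bochner_Integration.integral_diff[OF Bochner_Integration.integrable_diff[OF int(1,2)] int(3)]
        Bochner_Integration.integral_diff[OF int(1,2)] integral_mult_right_zero)
  have "norm (CLINT x|M. ?r x) \<le> (\<integral>x. norm (?r x) \<partial>M)"
    by (rule integral_norm_bound)
  also have "\<dots> \<le> (\<integral>x. 8 / (Im z)\<^sup>2 * (norm h)\<^sup>2 \<partial>M)"
  proof (rule integral_mono_AE)
    show "integrable M (\<lambda>x. norm (?r x))"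
      using int by (intro integrable_norm Bochner_Integration.integrable_diff)
    show "AE x in M. norm (?r x) \<le> 8 / (Im z)\<^sup>2 * (norm h)\<^sup>2"
      using exp_i_mult_first_order[OF z T_nonneg h] by (intro AE_I2)
  qed (rule integrable_const)
  also have "\<dots> = 8 / (Im z)\<^sup>2 * (norm h)\<^sup>2"
    by (simp only: lebesgue_integral_const prob_space scaleR_one)
  finally show ?thesis
    unfolding remainder_integral .
qed

lemma holomorphic_on_fourier_laplace: "fourier_laplace M T holomorphic_on {z. Im z > 0}"
  unfolding holomorphic_on_open[OF open_halfspace_Im_gt]
proof safe
  fix z :: complex assume z: "Im z > 0"
  have "\<forall>\<^sub>F w in at z. norm (w - z) \<le> Im z / 2"
    unfolding eventually_at dist_norm using z by (intro exI[of _ "Im z / 2"]) auto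
  then have "\<forall>\<^sub>F w in at z. norm (fourier_laplace M T w - fourier_laplace M T z
                 - (w - z) * (CLINT x|M. \<i> * T x * exp (\<i> * z * T x)))
               \<le> 8 / (Im z)\<^sup>2 * (norm (w - z))\<^sup>2"
  proof eventually_elim
    case (elim w)
    have "z + (w - z) = w" by simp
    with fourier_laplace_first_order[OF z elim] show ?case by simp
  qed
  then show "\<exists>f'. (fourier_laplace M T has_field_derivative f') (at z)"
    by (blast intro: has_field_derivative_of_quadratic_remainder)
qed

lemma fourier_laplace_of_real: "fourier_laplace M T (of_real \<omega>) = (CLINT x|M. iexp (\<omega> * T x))"
  by (simp add: fourier_laplace_def mult.assoc)

lemma fourier_laplace_imaginary: "fourier_laplace M T (\<i> * of_real y) = of_real (LINT x|M. exp (- y * T x))"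
proof -
  have "exp (\<i> * (\<i> * y) * T x) = of_real (exp (- y * T x))" for x
    by (simp flip: exp_of_real)
  then show ?thesis by (simp add: fourier_laplace_def)
qed

lemma one_minus_mult_expectation_le_laplace:
  assumes T: "integrable M T" and y: "y \<ge> 0"
  shows "1 - y * expectation T \<le> (LINT x|M. exp (- y * T x))"
proof -
  have "(LINT x|M. 1 - y * T x) \<le> (LINT x|M. exp (- y * T x))"
  proof (rule integral_mono)
    show "integrable M (\<lambda>x. 1 - y * T x)"
      using T by (intro Bochner_Integration.integrable_diff integrable_mult_right integrable_const)
    have "AE x in M. norm (exp (- y * T x)) \<le> 1"
      using y T_nonneg by (intro AE_I2) (simp add: mult_nonneg_nonneg)
    then show "integrable M (\<lambda>x. exp (- y * T x))"
      by (rule integrable_const_bound) measurable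
    show "1 - y * T x \<le> exp (- y * T x)" for x
      using exp_ge_add_one_self[of "- y * T x"] by simp
  qed
  also have "(LINT x|M. 1 - y * T x) = 1 - y * expectation T"
    using T by (simp add: prob_space)
  finally show ?thesis .
qed

end

lemma Im_Ln_mono_vertical:
  assumes "Re w = Re w'" "Re w' \<ge> 0" "Im w' \<le> Im w" "w \<noteq> 0" "w' \<noteq> 0"
  shows "Im (Ln w') \<le> Im (Ln w)"
proof (cases "Re w' = 0")
  case False
  with assms have "Re w' > 0" by simp
  with assms have "Im w' / Re w' \<le> Im w / Re w" by (simp add: divide_right_mono)
  with \<open>Re w' > 0\<close> assms show ?thesis
    by (simp add: Im_Ln_eq arctan_monotone')
next
  case True
  with assms have "Im w \<noteq> 0" "Im w' \<noteq> 0" by (auto simp: complex_eq_iff)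
  with True assms show ?thesis by (auto simp: Im_Ln_eq)
qed

definition segment_log :: "real \<Rightarrow> complex \<Rightarrow> complex" where
  "segment_log D z = Ln (- \<i> * (z - D)) - Ln (- \<i> * (z + D))"

text \<open>For \<open>Im z > 0\<close> this is the angle under which the segment \<open>[-D, D]\<close> is seen from \<open>z\<close>;
  \<open>1 - segment_angle D z / pi\<close> is the harmonic measure of \<open>{x. \<bar>x\<bar> \<ge> D}\<close> in the upper half-plane.\<close>
definition segment_angle :: "real \<Rightarrow> complex \<Rightarrow> real" where
  "segment_angle D z = Im (segment_log D z)"

lemma Ln_shifts_notin_nonpos_Reals:
  fixes D :: real
  assumes "Im w \<ge> 0" "w \<noteq> D" "w \<noteq> - D"
  shows "- \<i> * (w - D) \<notin> \<real>\<^sub>\<le>\<^sub>0" "- \<i> * (w + D) \<notin> \<real>\<^sub>\<le>\<^sub>0"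
  using assms by (auto simp: complex_nonpos_Reals_iff complex_eq_iff)

lemma holomorphic_on_segment_log: "segment_log D holomorphic_on {w. Im w > 0}"
  unfolding segment_log_def
  by (intro holomorphic_intros) (use Ln_shifts_notin_nonpos_Reals in \<open>auto simp: complex_eq_iff\<close>)

lemma continuous_on_segment_log:
  "continuous_on ({w. Im w \<ge> 0} - {of_real D, - of_real D}) (segment_log D)"
  unfolding segment_log_def
  by (intro continuous_intros) (use Ln_shifts_notin_nonpos_Reals in auto)

lemma segment_angle_nonneg:
  assumes "D > 0" "Im z \<ge> 0" "z \<noteq> D" "z \<noteq> - D"
  shows "0 \<le> segment_angle D z"
proof -
  have "- \<i> * (z + D) \<noteq> 0" using assms(4) by (auto simp: add_eq_0_iff)
  with assms have "Im (Ln (- \<i> * (z + D))) \<le> Im (Ln (- \<i> * (z - D)))"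
    by (intro Im_Ln_mono_vertical) auto
  then show ?thesis unfolding segment_angle_def segment_log_def by simp
qed

lemma segment_angle_of_real:
  assumes "\<bar>x\<bar> < D"
  shows "segment_angle D x = pi"
proof -
  have "- \<i> * (x - D) \<noteq> 0" "- \<i> * (x + D) \<noteq> 0"
    using assms by (auto simp: complex_eq_iff)
  then have "Im (Ln (- \<i> * (x - D))) = pi / 2" "Im (Ln (- \<i> * (x + D))) = - pi / 2"
    using Im_Ln_eq_pi_half(1)[of "- \<i> * (x - D)"] Im_Ln_eq_pi_half(2)[of "- \<i> * (x + D)"] assms
    by auto
  then show ?thesis unfolding segment_angle_def segment_log_def by simp
qed

lemma segment_angle_imaginary:
  assumes "D > 0" "y > 0"
  shows "segment_angle D (\<i> * y) = pi - 2 * arctan (y / D)"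
proof -
  have "Im (Ln (- \<i> * (\<i> * y - D))) = arctan (D / y)"
    "Im (Ln (- \<i> * (\<i> * y + D))) = - arctan (D / y)"
    using assms by (auto simp: Im_Ln_eq complex_eq_iff arctan_minus)
  moreover have "arctan (D / y) = pi / 2 - arctan (y / D)"
    using arctan_inverse[of "y / D"] assms by (simp add: inverse_eq_divide)
  ultimately show ?thesis unfolding segment_angle_def segment_log_def by simp
qed

text \<open>The set where \<open>norm (G w) > B\<close> is open, its closure lies in \<open>C \<subseteq> A\<close>, and
  \<open>norm G \<le> B\<close> on its frontier.\<close>
lemma maximum_modulus_off_compact:
  fixes G :: "complex \<Rightarrow> complex"
  assumes "open U" "G holomorphic_on U" "continuous_on A G" "U \<subseteq> A" "compact C" "C \<subseteq> A"
    and boundary: "\<And>w. w \<in> A - U \<Longrightarrow> norm (G w) \<le> B"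
    and outside: "\<And>w. w \<in> U - C \<Longrightarrow> norm (G w) \<le> B"
    and "z \<in> U"
  shows "norm (G z) \<le> B"
proof (rule ccontr)
  define S where "S = U \<inter> (\<lambda>w. norm (G w)) -` {B<..}"
  assume "\<not> norm (G z) \<le> B"
  with \<open>z \<in> U\<close> have "z \<in> S" by (simp add: S_def)
  have "continuous_on U G"
    using \<open>G holomorphic_on U\<close> by (rule holomorphic_on_imp_continuous_on)
  then have "open S"
    unfolding S_def using \<open>open U\<close> by (intro continuous_open_preimage continuous_intros) auto
  have "S \<subseteq> C" using outside by (force simp: S_def)
  then have closure: "closure S \<subseteq> C"
    using \<open>compact C\<close> by (simp add: closure_minimal compact_imp_closed)
  have "G holomorphic_on interior S"
    using \<open>G holomorphic_on U\<close> \<open>open S\<close>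
    by (simp add: interior_open) (rule holomorphic_on_subset, auto simp: S_def)
  moreover have "continuous_on (closure S) G"
    using closure \<open>C \<subseteq> A\<close> by (blast intro: continuous_on_subset[OF \<open>continuous_on A G\<close>])
  moreover have "bounded S"
    using \<open>S \<subseteq> C\<close> \<open>compact C\<close> by (blast intro: bounded_subset compact_imp_bounded)
  moreover have "norm (G w) \<le> B" if "w \<in> frontier S" for w
  proof (cases "w \<in> U")
    case True
    have "w \<notin> S" using that \<open>open S\<close> by (simp add: frontier_def interior_open)
    with True show ?thesis by (simp add: S_def)
  next
    case False
    with that closure \<open>C \<subseteq> A\<close> show ?thesis by (intro boundary) (auto simp: frontier_def)
  qed
  ultimately have "norm (G z) \<le> B"
    using \<open>z \<in> S\<close> by (rule maximum_modulus_frontier)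
  with \<open>\<not> norm (G z) \<le> B\<close> show False by simp
qed

lemma s_le_powr_segment_angle:
  assumes "D > 0" "0 < s" "s \<le> 1" "Im w \<ge> 0" "w \<noteq> D" "w \<noteq> - D"
  shows "s \<le> s powr (1 - segment_angle D w / pi)"
  using powr_mono'[of "1 - segment_angle D w / pi" 1 s] segment_angle_nonneg[of D w] assms
  by simp

lemma one_le_norm_one_minus_i_mult:
  fixes \<delta> :: real
  assumes "\<delta> \<ge> 0" "Im w \<ge> 0"
  shows "1 \<le> norm (1 - \<i> * \<delta> * w)"
proof -
  have "1 \<le> Re (1 - \<i> * \<delta> * w)" using assms by simp
  also have "\<dots> \<le> norm (1 - \<i> * \<delta> * w)" by (rule complex_Re_le_cmod)
  finally show ?thesis .
qed

lemma mult_norm_minus_one_le_norm_one_minus_i_mult: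
  fixes \<delta> :: real
  assumes "\<delta> \<ge> 0"
  shows "\<delta> * norm w - 1 \<le> norm (1 - \<i> * \<delta> * w)"
  using norm_triangle_ineq4[of 1 "1 - \<i> * \<delta> * w"] assms by (simp add: norm_mult)

lemma continuous_on_obtain_norm_less_near:
  fixes f :: "'a::real_normed_vector \<Rightarrow> 'b::real_normed_vector"
  assumes "continuous_on S f" "p \<in> S" "norm (f p) < s"
  obtains r where "r > 0" "\<And>w. w \<in> S \<Longrightarrow> norm (w - p) < r \<Longrightarrow> norm (f w) < s"
proof -
  obtain r where "r > 0" and r: "\<forall>w\<in>S. dist w p < r \<longrightarrow> dist (f w) (f p) < s - norm (f p)"
    using assms unfolding continuous_on_iff by (meson diff_gt_0_iff_gt)
  show ?thesis
  proof (rule that[OF \<open>r > 0\<close>])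
    fix w assume "w \<in> S" "norm (w - p) < r"
    with r have "norm (f w - f p) < s - norm (f p)" by (simp add: dist_norm)
    then show "norm (f w) < s" using norm_triangle_sub[of "f w" "f p"] by linarith
  qed
qed

lemma two_constants_bound_off_region:
  fixes f :: "complex \<Rightarrow> complex" and D s \<delta> :: real
  assumes le_1: "\<And>w. Im w \<ge> 0 \<Longrightarrow> norm (f w) \<le> 1"
    and D: "D > 0" and s: "0 < s" "s < 1"
    and small: "\<And>x. \<bar>x\<bar> \<ge> D \<Longrightarrow> norm (f (of_real x)) < s"
    and \<delta>: "\<delta> > 0" and w: "Im w \<ge> 0" "w \<noteq> D" "w \<noteq> - D"
    and off: "Im w = 0 \<or> norm (f w) < s \<or> (1 + 1 / s) / \<delta> < norm w"
  shows "norm (f w) \<le> s powr (1 - segment_angle D w / pi) * norm (1 - \<i> * \<delta> * w)"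
proof -
  have weight: "s \<le> s powr (1 - segment_angle D w / pi)"
    using s_le_powr_segment_angle[OF D s(1) less_imp_le[OF s(2)] w] .
  have den: "1 \<le> norm (1 - \<i> * \<delta> * w)"
    using one_le_norm_one_minus_i_mult[of \<delta> w] \<delta> w by simp
  have real: "of_real (Re w) = w" if "Im w = 0"
    using that by (simp add: complex_eq_iff)
  have "norm (f w) < s" if "Im w = 0" "\<bar>Re w\<bar> \<ge> D"
    using small[OF that(2)] real[OF that(1)] by simp
  with off consider "Im w = 0" "\<bar>Re w\<bar> < D" | "norm (f w) < s" | "(1 + 1 / s) / \<delta> < norm w"
    by (meson not_less)
  then show ?thesis
  proof cases
    case 1
    then have "segment_angle D w = pi"
      using segment_angle_of_real[of "Re w" D] real by simp
    with le_1[OF w(1)] den s show ?thesis by simp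
  next
    case 2
    have "s * 1 \<le> s powr (1 - segment_angle D w / pi) * norm (1 - \<i> * \<delta> * w)"
      using weight den s by (intro mult_mono) auto
    with 2 show ?thesis by simp
  next
    case 3
    then have "1 / s \<le> norm (1 - \<i> * \<delta> * w)"
      using mult_norm_minus_one_le_norm_one_minus_i_mult[of \<delta> w] \<delta> by (simp add: field_simps)
    then have "s * (1 / s) \<le> s powr (1 - segment_angle D w / pi) * norm (1 - \<i> * \<delta> * w)"
      using weight s by (intro mult_mono) auto
    with le_1[of w] w s show ?thesis by simp
  qed
qed

text \<open>The maximum principle is applied to \<open>G = f * exp (- H) / (1 - \<i> * \<delta> * _)\<close>, where
  \<open>exp (Re H)\<close> is the claimed bound; the denominator makes \<open>G\<close> small far out, so that only a
  bounded region matters.\<close>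
lemma two_constants_upper_half_plane_damped:
  fixes f :: "complex \<Rightarrow> complex" and D s \<delta> :: real
  assumes cont: "continuous_on {w. Im w \<ge> 0} f" and holo: "f holomorphic_on {w. Im w > 0}"
    and le_1: "\<And>w. Im w \<ge> 0 \<Longrightarrow> norm (f w) \<le> 1"
    and D: "D > 0" and s: "0 < s" "s < 1"
    and small: "\<And>x. \<bar>x\<bar> \<ge> D \<Longrightarrow> norm (f (of_real x)) < s"
    and \<delta>: "\<delta> > 0" and z: "Im z > 0"
  shows "norm (f z) \<le> s powr (1 - segment_angle D z / pi) * norm (1 - \<i> * \<delta> * z)"
proof -
  define bound where "bound w = s powr (1 - segment_angle D w / pi) * norm (1 - \<i> * \<delta> * w)"
    for w :: complex
  define H where "H w = ln s * (1 + \<i> / pi * segment_log D w)" for w :: complex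
  define G where "G w = f w * exp (- H w) / (1 - \<i> * \<delta> * w)" for w :: complex
  define A where "A = {w. Im w \<ge> 0} - {of_real D, - of_real D}"
  have den_nonzero: "1 - \<i> * \<delta> * w \<noteq> 0" if "Im w \<ge> 0" for w
    using one_le_norm_one_minus_i_mult[of \<delta> w] that \<delta> by auto
  have bound_pos: "0 < bound w" if "Im w \<ge> 0" for w
    unfolding bound_def using one_le_norm_one_minus_i_mult[of \<delta> w] that \<delta> s
    by (intro mult_pos_pos) auto
  have norm_G: "norm (G w) = norm (f w) / bound w" for w
  proof -
    have "exp (Re (H w)) = s powr (1 - segment_angle D w / pi)"
      using s by (simp add: H_def segment_angle_def powr_def algebra_simps diff_divide_distrib)
    then have "norm (exp (- H w)) = inverse (s powr (1 - segment_angle D w / pi))"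
      by (simp add: norm_inverse norm_exp_eq_Re exp_minus)
    then show ?thesis
      by (simp add: G_def bound_def norm_divide norm_mult norm_inverse divide_inverse
          inverse_mult_distrib mult_ac)
  qed
  have G_le_1: "norm (G w) \<le> 1"
    if "w \<in> A" "Im w = 0 \<or> norm (f w) < s \<or> (1 + 1 / s) / \<delta> < norm w" for w
    using that bound_pos[of w] two_constants_bound_off_region[where f = f, OF le_1 D s small \<delta>, of w]
    by (auto simp: A_def norm_G bound_def divide_le_eq_1)
  obtain r1 where "r1 > 0" and r1: "\<And>w. Im w \<ge> 0 \<Longrightarrow> norm (w - D) < r1 \<Longrightarrow> norm (f w) < s"
    using continuous_on_obtain_norm_less_near[OF cont, of "of_real D" s] small[of D] D by auto
  obtain r2 where "r2 > 0" and r2: "\<And>w. Im w \<ge> 0 \<Longrightarrow> norm (w + D) < r2 \<Longrightarrow> norm (f w) < s"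
    using continuous_on_obtain_norm_less_near[OF cont, of "- of_real D" s] small[of "- D"] D by auto
  define C where "C = {w. Im w \<ge> 0 \<and> norm w \<le> (1 + 1 / s) / \<delta> \<and>
                           min r1 r2 \<le> norm (w - D) \<and> min r1 r2 \<le> norm (w + D)}"
  have "norm (G z) \<le> 1"
  proof (rule maximum_modulus_off_compact[where G = G and U = "{w. Im w > 0}" and A = A and C = C])
    show "G holomorphic_on {w. Im w > 0}"
      unfolding G_def H_def using den_nonzero
      by (intro holomorphic_intros holo holomorphic_on_segment_log) auto
    show "continuous_on A G"
      unfolding G_def H_def A_def using den_nonzero
      by (intro continuous_intros continuous_on_subset[OF cont] continuous_on_segment_log) auto
    show "compact C"
      unfolding compact_eq_bounded_closed C_def
      by (intro conjI bounded_subset[OF bounded_cball[of 0 "(1 + 1 / s) / \<delta>"]]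
          closed_Collect_conj closed_Collect_le continuous_intros) auto
    show "C \<subseteq> A" "{w. Im w > 0} \<subseteq> A"
      using \<open>r1 > 0\<close> \<open>r2 > 0\<close> by (auto simp: A_def C_def)
    show "norm (G w) \<le> 1" if "w \<in> A - {w. Im w > 0}" for w
      using that by (intro G_le_1) (auto simp: A_def)
    show "norm (G w) \<le> 1" if "w \<in> {w. Im w > 0} - C" for w
      using that r1[of w] r2[of w] by (intro G_le_1) (auto simp: A_def C_def)
  qed (use z open_halfspace_Im_gt in auto)
  with bound_pos[of z] z have "norm (f z) \<le> bound z"
    by (auto simp: norm_G divide_le_eq_1)
  then show ?thesis by (simp add: bound_def)
qed

lemma two_constants_upper_half_plane:
  fixes f :: "complex \<Rightarrow> complex" and D s :: real
  assumes "continuous_on {w. Im w \<ge> 0} f" "f holomorphic_on {w. Im w > 0}"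
    and "\<And>w. Im w \<ge> 0 \<Longrightarrow> norm (f w) \<le> 1"
    and "D > 0" "0 < s" "s < 1"
    and "\<And>x. \<bar>x\<bar> \<ge> D \<Longrightarrow> norm (f (of_real x)) < s"
    and "Im z > 0"
  shows "norm (f z) \<le> s powr (1 - segment_angle D z / pi)"
proof (rule tendsto_le[OF trivial_limit_at_right_real])
  let ?bound = "\<lambda>\<delta>::real. s powr (1 - segment_angle D z / pi) * norm (1 - \<i> * \<delta> * z)"
  have "(?bound \<longlongrightarrow> ?bound 0) (at_right 0)"
    by (intro tendsto_intros)
  then show "(?bound \<longlongrightarrow> s powr (1 - segment_angle D z / pi)) (at_right 0)"
    by simp
  show "\<forall>\<^sub>F \<delta> in at_right 0. norm (f z) \<le> ?bound \<delta>"
    using eventually_at_right_less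
    by eventually_elim (rule two_constants_upper_half_plane_damped[OF assms(1-7) _ assms(8)])
qed simp

lemma tendsto_difference_quotient_at_right_0:
  fixes f :: "real \<Rightarrow> real"
  assumes "(f has_real_derivative f') (at 0)" "f 0 = 0"
  shows "((\<lambda>y. f y / y) \<longlongrightarrow> f') (at_right 0)"
  using assms unfolding DERIV_def
  by (auto intro: tendsto_mono[OF at_le])

text \<open>Letting \<open>y \<rightarrow> 0\<close> in \<open>ln (1 - y * \<mu>) / y \<le> 2 ln s / pi * arctan (y / D) / y\<close>.\<close>
lemma exp_le_of_linear_le_powr_arctan:
  fixes D \<mu> s :: real
  assumes D: "D > 0" and s: "0 < s" "s < 1"
    and le: "\<And>y. y > 0 \<Longrightarrow> 1 - y * \<mu> \<le> s powr (2 * arctan (y / D) / pi)"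
  shows "exp (- D * \<mu> * pi / 2) \<le> s"
proof -
  have lim_ln: "((\<lambda>y. ln (1 - y * \<mu>) / y) \<longlongrightarrow> - \<mu>) (at_right 0)"
    by (rule tendsto_difference_quotient_at_right_0) (auto intro!: derivative_eq_intros)
  have lim_arctan: "((\<lambda>y. 2 * ln s / pi * (arctan (y / D) / y)) \<longlongrightarrow> 2 * ln s / pi * (1 / D)) (at_right 0)"
    using D by (intro tendsto_intros tendsto_difference_quotient_at_right_0)
      (auto intro!: derivative_eq_intros)
  have "\<forall>\<^sub>F y in at_right 0. 0 < 1 - y * \<mu>"
    by (rule order_tendstoD) (auto intro!: tendsto_eq_intros)
  then have "\<forall>\<^sub>F y in at_right 0. ln (1 - y * \<mu>) / y \<le> 2 * ln s / pi * (arctan (y / D) / y)"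
    using eventually_at_right_less
  proof eventually_elim
    case (elim y)
    have "ln (1 - y * \<mu>) \<le> ln (s powr (2 * arctan (y / D) / pi))"
      using le[of y] elim s by (subst ln_le_cancel_iff) auto
    then show ?case
      using elim s by (simp add: ln_powr divide_right_mono field_simps)
  qed
  with lim_arctan lim_ln have "- \<mu> \<le> 2 * ln s / pi * (1 / D)"
    by (rule tendsto_le[OF trivial_limit_at_right_real])
  then have "- D * \<mu> * pi / 2 \<le> ln s"
    using D by (simp add: field_simps)
  then have "exp (- D * \<mu> * pi / 2) \<le> exp (ln s)"
    by simp
  with s show ?thesis by simp
qed

context nonneg_random_variable
begin

lemma exp_expectation_le_of_norm_char_less:
  assumes "integrable M T" "D > 0" "0 < s" "s < 1"
    and small: "\<And>\<omega>. \<bar>\<omega>\<bar> \<ge> D \<Longrightarrow> norm (CLINT x|M. iexp (\<omega> * T x)) < s"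
  shows "exp (- D * expectation T * pi / 2) \<le> s"
proof (rule exp_le_of_linear_le_powr_arctan[OF assms(2-4)])
  fix y :: real assume "y > 0"
  have "1 - y * expectation T \<le> (LINT x|M. exp (- y * T x))"
    using assms(1) \<open>y > 0\<close> by (intro one_minus_mult_expectation_le_laplace) auto
  also have "\<dots> \<le> norm (fourier_laplace M T (\<i> * y))"
    by (simp add: fourier_laplace_imaginary)
  also have "\<dots> \<le> s powr (1 - segment_angle D (\<i> * y) / pi)"
    using continuous_on_fourier_laplace holomorphic_on_fourier_laplace norm_fourier_laplace_le_1
      assms(2-4) small \<open>y > 0\<close>
    by (intro two_constants_upper_half_plane) (auto simp: fourier_laplace_of_real)
  also have "\<dots> = s powr (2 * arctan (y / D) / pi)"
    using assms(2) \<open>y > 0\<close> by (simp add: segment_angle_imaginary field_simps)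
  finally show "1 - y * expectation T \<le> s powr (2 * arctan (y / D) / pi)" .
qed

lemma norm_char_le_Sup:
  assumes "\<bar>\<omega>\<bar> \<ge> \<Delta>"
  shows "norm (CLINT x|M. iexp (\<omega> * T x)) \<le> (SUP \<omega>\<in>{\<omega>. \<bar>\<omega>\<bar> \<ge> \<Delta>}. norm (CLINT x|M. iexp (\<omega> * T x)))"
proof (rule cSUP_upper)
  have "norm (CLINT x|M. iexp (\<omega> * T x)) \<le> 1" for \<omega>
    using norm_fourier_laplace_le_1[of "of_real \<omega>"] by (simp only: fourier_laplace_of_real Im_complex_of_real order_refl)
  then show "bdd_above ((\<lambda>\<omega>. norm (CLINT x|M. iexp (\<omega> * T x))) ` {\<omega>. \<bar>\<omega>\<bar> \<ge> \<Delta>})"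
    by (auto intro: bdd_aboveI[where M = 1])
qed (use assms in simp)

lemma exp_expectation_le_Sup_norm_char:
  assumes "integrable M T" "\<Delta> > 0"
  shows "exp (- \<Delta> * expectation T * pi / 2) \<le> (SUP \<omega>\<in>{\<omega>. \<bar>\<omega>\<bar> \<ge> \<Delta>}. norm (CLINT x|M. iexp (\<omega> * T x)))"
    (is "_ \<le> ?S")
proof (rule dense_ge)
  fix s assume "?S < s"
  show "exp (- \<Delta> * expectation T * pi / 2) \<le> s"
  proof (cases "s < 1")
    case True
    have "0 \<le> ?S"
      using norm_char_le_Sup[of \<Delta> \<Delta>, OF abs_ge_self] norm_ge_zero[of "CLINT x|M. iexp (\<Delta> * T x)"]
      by linarith
    with True \<open>?S < s\<close> norm_char_le_Sup show ?thesis
      by (intro exp_expectation_le_of_norm_char_less[OF assms]) (auto intro: le_less_trans)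
  next
    case False
    have "0 \<le> expectation T" using T_nonneg by (intro integral_nonneg_AE AE_I2)
    then have "exp (- \<Delta> * expectation T * pi / 2) \<le> 1"
      using assms(2) by simp
    with False show ?thesis by linarith
  qed
qed

end

theorem theorem3:
  fixes M :: "'a measure" and T :: "'a \<Rightarrow> real" and \<Delta> :: real
  assumes "prob_space M"
    and "T \<in> borel_measurable M"
    and "\<And>x. x \<in> space M \<Longrightarrow> T x > 0"
    and "\<Delta> > 0"
  shows "(SUP \<omega>\<in>{\<omega>. \<bar>\<omega>\<bar> \<ge> \<Delta>}. cmod (CLINT x|M. iexp (\<omega> * T x)))
           \<ge> (if (\<integral>\<^sup>+ x. ennreal (T x) \<partial>M) = \<infinity> then 0
              else exp (- \<Delta> * enn2real (\<integral>\<^sup>+ x. ennreal (T x) \<partial>M) * pi / 2))"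
proof -
  have "nonneg_random_variable M T"
    using assms(1-3) unfolding nonneg_random_variable_def nonneg_random_variable_axioms_def
    by (auto intro: less_imp_le)
  then interpret nonneg_random_variable M T .
  have AE_nonneg: "AE x in M. 0 \<le> T x" using T_nonneg by (intro AE_I2)
  show ?thesis
  proof (cases "(\<integral>\<^sup>+ x. ennreal (T x) \<partial>M) = \<infinity>")
    case True
    show ?thesis
      unfolding if_P[OF True]
      using norm_char_le_Sup[of \<Delta> \<Delta>, OF abs_ge_self] norm_ge_zero[of "CLINT x|M. iexp (\<Delta> * T x)"]
      by linarith
  next
    case False
    then have "integrable M T"
      using assms(2) AE_nonneg by (intro integrableI_nonneg) (auto simp: less_top)
    have mean: "enn2real (\<integral>\<^sup>+ x. ennreal (T x) \<partial>M) = expectation T"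
      using assms(2) AE_nonneg by (simp add: integral_eq_nn_integral)
    show ?thesis
      unfolding if_not_P[OF False] mean using \<open>integrable M T\<close> assms(4)
      by (rule exp_expectation_le_Sup_norm_char)
  qed
qed

end
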